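(* Let $n,N\ge1$ and positive integers $r_1,\dots,r_N,r$ with $r_i\le r\le\lfloor(n-1)/2\rfloor$; let $f:\mathbb{R}^{Nn}\to\mathbb{R}$ be nonnegative, level-bounded and continuously differentiable with Lipschitz gradient; let $(k,\mathcal{A}_i,\Omega,C_i)$ be given by one of Variants I, II, III in the context, and for $\lambda>0$ let $$F_\lambda(y)=f(y)+\delta_\Omega(y)+\sum_{i=1}^k\frac1{2\lambda}\mathrm{dist}^2(\mathcal{A}_i(y),C_i).$$ Consider the penalty method: pick positive sequences $\epsilon_t\downarrow0$ and $\lambda_t\downarrow0$, a number $\bar\lambda\ge0$, a point $y^{\rm feas}\in\Omega$ with $\mathcal{A}_i(y^{\rm feas})\in C_i$ for all $i$, and $y^0\in\Omega$. For $t=0,1,\dots$: set $y^{t,0}=y^t$ if $F_{\lambda_t}(y^t)\le F_{\lambda_t}(y^{\rm feas})$ and $y^{t,0}=y^{\rm feas}$ otherwise; run the vNPG$_{\rm major}$ algorithm (described in the context) for $F_{\lambda_t}$ from $y^{t,0}$ and stop at an iterate $y^{t,l_t}$ satisfying $$\|y^{t,l_t+1}-y^{t,l_t}\|\le\epsilon_t,\quad F_{\lambda_t}(y^{t,l_t})\le F_{\lambda_t}(y^{t,0}),$$ $$\mathrm{dist}\Big(0,\nabla f(y^{t,l_t})+N_\Omega(y^{t,l_t+1})+\sum_{i=1}^k\frac1{\lambda_t}\mathcal{A}_i^*\big(\mathcal{A}_i(y^{t,l_t})-\mathcal{P}_{C_i}(\mathcal{A}_i(y^{t,l_t}))\big)\Big)\le\epsilon_t;$$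 set $y^{t+1}=y^{t,l_t}$; if $\lambda_{t+1}<\bar\lambda$ and $\bar\lambda>0$, stop. Then for every $t\ge1$ for which $y^t$ is generated and every $i=1,\dots,k$, $$\mathrm{dist}(\mathcal{A}_i(y^t),C_i)\le\sqrt{2\lambda_{t-1}f(y^{\rm feas})}.$$
   Context: For $x\in\mathbb{R}^n$ and $1\le l\le n$, $\mathcal{H}_l(x)\in\mathbb{R}^{l\times(n-l+1)}$ has $(i,j)$ entry $x(i+j-1)$. For $y=(y_1^\top,\dots,y_N^\top)^\top$, $\mathcal{L}_i(y)=\mathcal{H}_{r_i+1}(y_i)$ and $\mathcal{L}(y)=[\mathcal{H}_{r+1}(y_1)\cdots\mathcal{H}_{r+1}(y_N)]$. Variant I: $k=1$, $\mathcal{A}_1=\mathcal{L}$, $\Omega=\{y:\mathrm{rank}\,\mathcal{L}_i(y)\le r_i\ \forall i\}$, $C_1=\{Y:\mathrm{rank}\,Y\le r\}$. Variant II: $k=N$, $\mathcal{A}_i=\mathcal{L}_i$, $\Omega=\{y:\mathrm{rank}\,\mathcal{L}(y)\le r\}$, $C_i=\{Y:\mathrm{rank}\,Y\le r_i\}$. Variant III: $k=N+1$, $\mathcal{A}_i=\mathcal{L}_i$ ($i\le N$), $\mathcal{A}_{N+1}=\mathcal{L}$, $\Omega=\mathbb{R}^{Nn}$, $C_i=\{Y:\mathrm{rank}\,Y\le r_i\}$ ($i\le N$), $C_{N+1}=\{Y:\mathrm{rank}\,Y\le r\}$. Matrix distances/projections use the Frobenius norm; $N_\Omega$ is the limiting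 normal cone; $\delta_\Omega$ the indicator function. Pseudo-projection $\mathcal{P}^s_\Omega(x;u)$ ($u\in\Omega$): all $y\in\Omega$ with $x-y\in N_\Omega(y)$ and $\|y-x\|\le\|u-x\|$. vNPG$_{\rm major}$ for $F_\lambda$ from a starting point $y^0\in\Omega$, with $h(y)=f(y)+\sum_i\frac1{2\lambda}\|\mathcal{A}_i(y)\|_F^2$ and parameters $L_{\max}>L_{\min}>0$, $\tau>1$, $c>0$, integer $M\ge0$: at iteration $l$ pick $\xi^l\in\sum_i\frac1\lambda\mathcal{A}_i^*(\mathcal{P}_{C_i}(\mathcal{A}_i(y^l)))$, $L_l^0\in[L_{\min},L_{\max}]$, and for $i=0,1,\dots$ take $u_i^l\in\mathcal{P}^s_\Omega(y^l-\frac1{L_l^0\tau^i}(\nabla h(y^l)-\xi^l);y^l)$ until $F_\lambda(u_i^l)\le\max_{[l-M]_+\le j\le l}F_\lambda(y^j)-\frac c2\|u_i^l-y^l\|^2$; then $y^{l+1}=u_i^l$. *)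

theory Defs
  imports "HOL-Analysis.Analysis"
begin

text \<open>The space R^(Nn) is the Euclidean space (real^'n::enum)^'N::enum, with n = CARD('n) and
 N = CARD('N); block y_i is y $ i.  Both index types carry an enumeration
 (class enum) which fixes the identification of 'n with {1..n} (entry k+1 is
 x $ elt k) and the order of the blocks in the concatenation L(y).
 Matrices are functions nat => nat => real (0-indexed) together with explicit
 dimensions p x q; entries outside the dimensions are irrelevant/zero.
 The k maps A_i are indexed by 'N option: Some b stands for L_b, None for L.\<close>

type_synonym mat = "nat \<Rightarrow> nat \<Rightarrow> real"

definition elt :: "nat \<Rightarrow> 'a::enum" where
  "elt k = enum_class.enum ! k"

definition mspace :: "nat \<Rightarrow> nat \<Rightarrow> mat set" where
  "mspace p q = {Y. \<forall>a b. (p \<le> a \<or> q \<le> b) \<longrightarrow> Y a b = 0}"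

definition frob_inner :: "nat \<Rightarrow> nat \<Rightarrow> mat \<Rightarrow> mat \<Rightarrow> real" where
  "frob_inner p q X Y = (\<Sum>a<p. \<Sum>b<q. X a b * Y a b)"

definition fro :: "nat \<Rightarrow> nat \<Rightarrow> mat \<Rightarrow> real" where
  "fro p q X = sqrt (\<Sum>a<p. \<Sum>b<q. (X a b)\<^sup>2)"

definition mminus :: "mat \<Rightarrow> mat \<Rightarrow> mat" where
  "mminus X Y = (\<lambda>a b. X a b - Y a b)"

definition cols_indep :: "nat \<Rightarrow> mat \<Rightarrow> nat set \<Rightarrow> bool" where
  "cols_indep p X J \<longleftrightarrow>
     (\<forall>c::nat \<Rightarrow> real. (\<forall>a<p. (\<Sum>j\<in>J. c j * X a j) = 0) \<longrightarrow> (\<forall>j\<in>J. c j = 0))"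

definition mrank :: "nat \<Rightarrow> nat \<Rightarrow> mat \<Rightarrow> nat" where
  "mrank p q X = Max {card J | J. J \<subseteq> {..<q} \<and> cols_indep p X J}"

definition mdist :: "nat \<Rightarrow> nat \<Rightarrow> mat \<Rightarrow> mat set \<Rightarrow> real" where
  "mdist p q X C = Inf ((\<lambda>Y. fro p q (mminus X Y)) ` C)"

definition mproj :: "nat \<Rightarrow> nat \<Rightarrow> mat \<Rightarrow> mat set \<Rightarrow> mat set" where
  "mproj p q X C = {Y \<in> C. fro p q (mminus X Y) = mdist p q X C}"

text \<open>H_l(x) in R^{l x (n-l+1)}, (i,j) entry x(i+j-1) (here 0-indexed: x(a+b)).\<close>
definition hank :: "nat \<Rightarrow> real^'n::enum \<Rightarrow> mat" where
  "hank l x = (\<lambda>a b. if a < l \<and> b < CARD('n) - l + 1 then x $ elt (a + b) else 0)"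

text \<open>L(y) = [H_{r+1}(y_1) ... H_{r+1}(y_N)], each block has n - r columns.\<close>
definition Lmap :: "nat \<Rightarrow> (real^'n::enum)^'N::enum \<Rightarrow> mat" where
  "Lmap r y = (\<lambda>a b. if b < CARD('N) * (CARD('n) - r)
      then hank (r + 1) (y $ elt (b div (CARD('n) - r))) a (b mod (CARD('n) - r))
      else 0)"

datatype variant = VarI | VarII | VarIII

definition Idx :: "variant \<Rightarrow> 'N::enum option set" where
  "Idx v = (case v of VarI \<Rightarrow> {None} | VarII \<Rightarrow> range Some | VarIII \<Rightarrow> UNIV)"

definition rowsA :: "('N \<Rightarrow> nat) \<Rightarrow> nat \<Rightarrow> 'N option \<Rightarrow> nat" where
  "rowsA rr r i = (case i of Some b \<Rightarrow> rr b + 1 | None \<Rightarrow> r + 1)"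

definition colsA :: "nat \<Rightarrow> nat \<Rightarrow> ('N::enum \<Rightarrow> nat) \<Rightarrow> nat \<Rightarrow> 'N option \<Rightarrow> nat" where
  "colsA n N rr r i = (case i of Some b \<Rightarrow> n - rr b | None \<Rightarrow> N * (n - r))"

definition Amap :: "('N \<Rightarrow> nat) \<Rightarrow> nat \<Rightarrow> 'N option \<Rightarrow> (real^'n::enum)^'N::enum \<Rightarrow> mat" where
  "Amap rr r i y = (case i of Some b \<Rightarrow> hank (rr b + 1) (y $ b) | None \<Rightarrow> Lmap r y)"

definition rankbd :: "('N::enum \<Rightarrow> nat) \<Rightarrow> nat \<Rightarrow> 'N option \<Rightarrow> nat" where
  "rankbd rr r i = (case i of Some b \<Rightarrow> rr b | None \<Rightarrow> r)"

definition Cset :: "nat \<Rightarrow> nat \<Rightarrow> ('N::enum \<Rightarrow> nat) \<Rightarrow> nat \<Rightarrow> 'N option \<Rightarrow> mat set" where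
  "Cset n N rr r i = {Y \<in> mspace (rowsA rr r i) (colsA n N rr r i).
       mrank (rowsA rr r i) (colsA n N rr r i) Y \<le> rankbd rr r i}"

definition Omega :: "variant \<Rightarrow> ('N \<Rightarrow> nat) \<Rightarrow> nat \<Rightarrow> ((real^'n::enum)^'N::enum) set" where
  "Omega v rr r = (case v of
      VarI \<Rightarrow> {y. \<forall>b. mrank (rr b + 1) (CARD('n) - rr b) (hank (rr b + 1) (y $ b)) \<le> rr b}
    | VarII \<Rightarrow> {y. mrank (r + 1) (CARD('N) * (CARD('n) - r)) (Lmap r y) \<le> r}
    | VarIII \<Rightarrow> UNIV)"

definition adjA :: "('N \<Rightarrow> nat) \<Rightarrow> nat \<Rightarrow> 'N option \<Rightarrow> mat \<Rightarrow> (real^'n::enum)^'N::enum" where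
  "adjA rr r i Y = (THE z. \<forall>y::(real^'n::enum)^'N::enum.
      frob_inner (rowsA rr r i) (colsA CARD('n) CARD('N) rr r i) (Amap rr r i y) Y = z \<bullet> y)"

definition grad :: "('a::real_inner \<Rightarrow> real) \<Rightarrow> 'a \<Rightarrow> 'a" where
  "grad g y = (THE D. (g has_derivative (\<lambda>u. D \<bullet> u)) (at y))"

definition regular_normal :: "'a::real_inner set \<Rightarrow> 'a \<Rightarrow> 'a set" where
  "regular_normal S y = {v. y \<in> S \<and>
      (\<forall>e>0. \<exists>d>0. \<forall>z\<in>S. dist z y < d \<longrightarrow> v \<bullet> (z - y) \<le> e * norm (z - y))}"

definition limiting_normal :: "'a::real_inner set \<Rightarrow> 'a \<Rightarrow> 'a set" where
  "limiting_normal S y = {v. y \<in> S \<and> (\<exists>ys vs. (\<forall>k. ys k \<in> S \<and> vs k \<in> regular_normal S (ys k))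
      \<and> ys \<longlonglongrightarrow> y \<and> vs \<longlonglongrightarrow> v)}"

definition pseudo_proj :: "'a::real_inner set \<Rightarrow> 'a \<Rightarrow> 'a \<Rightarrow> 'a set" where
  "pseudo_proj S x u = {y \<in> S. x - y \<in> limiting_normal S y \<and> norm (y - x) \<le> norm (u - x)}"

text \<open>dist(0,S), with dist(0,{}) = +infinity.\<close>
definition dist0 :: "'a::real_normed_vector set \<Rightarrow> ereal" where
  "dist0 S = (INF v\<in>S. ereal (norm v))"

definition Fpen :: "variant \<Rightarrow> ('N \<Rightarrow> nat) \<Rightarrow> nat \<Rightarrow> ((real^'n::enum)^'N::enum \<Rightarrow> real)
     \<Rightarrow> real \<Rightarrow> (real^'n::enum)^'N::enum \<Rightarrow> ereal" where
  "Fpen v rr r f lam y = ereal (f y) + (if y \<in> Omega v rr r then 0 else \<infinity>)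
     + ereal (\<Sum>i\<in>Idx v. 1 / (2 * lam) *
          (mdist (rowsA rr r i) (colsA CARD('n) CARD('N) rr r i) (Amap rr r i y)
                 (Cset CARD('n) CARD('N) rr r i))\<^sup>2)"

definition hfun :: "variant \<Rightarrow> ('N \<Rightarrow> nat) \<Rightarrow> nat \<Rightarrow> ((real^'n::enum)^'N::enum \<Rightarrow> real)
     \<Rightarrow> real \<Rightarrow> (real^'n::enum)^'N::enum \<Rightarrow> real" where
  "hfun v rr r f lam y = f y + (\<Sum>i\<in>Idx v. 1 / (2 * lam) *
          (fro (rowsA rr r i) (colsA CARD('n) CARD('N) rr r i) (Amap rr r i y))\<^sup>2)"

definition xiset :: "variant \<Rightarrow> ('N \<Rightarrow> nat) \<Rightarrow> nat \<Rightarrow> real \<Rightarrow> (real^'n::enum)^'N::enum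
     \<Rightarrow> ((real^'n::enum)^'N::enum) set" where
  "xiset v rr r lam y = {(\<Sum>i\<in>Idx v. (1 / lam) *\<^sub>R adjA rr r i (Z i)) | Z.
      \<forall>i\<in>Idx v. Z i \<in> mproj (rowsA rr r i) (colsA CARD('n) CARD('N) rr r i) (Amap rr r i y)
                               (Cset CARD('n) CARD('N) rr r i)}"

definition statset :: "variant \<Rightarrow> ('N \<Rightarrow> nat) \<Rightarrow> nat \<Rightarrow> ((real^'n::enum)^'N::enum \<Rightarrow> real)
     \<Rightarrow> real \<Rightarrow> (real^'n::enum)^'N::enum \<Rightarrow> (real^'n::enum)^'N::enum \<Rightarrow> ((real^'n::enum)^'N::enum) set" where
  "statset v rr r f lam y y' = {grad f y + w + (\<Sum>i\<in>Idx v. (1 / lam) *\<^sub>R adjA rr r i (mminus (Amap rr r i y) (Z i)))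
      | w Z. w \<in> limiting_normal (Omega v rr r) y' \<and>
      (\<forall>i\<in>Idx v. Z i \<in> mproj (rowsA rr r i) (colsA CARD('n) CARD('N) rr r i) (Amap rr r i y)
                               (Cset CARD('n) CARD('N) rr r i))}"

text \<open>One iteration l -> l+1 of vNPG_major for F_lam applied to the iterate
  history ys (ys 0, ..., ys l), with parameters Lmin, Lmax, tau, c, M.\<close>
definition npg_step :: "variant \<Rightarrow> ('N \<Rightarrow> nat) \<Rightarrow> nat \<Rightarrow> ((real^'n::enum)^'N::enum \<Rightarrow> real)
     \<Rightarrow> real \<Rightarrow> real \<Rightarrow> real \<Rightarrow> real \<Rightarrow> nat \<Rightarrow> real \<Rightarrow> (nat \<Rightarrow> (real^'n::enum)^'N::enum) \<Rightarrow> nat \<Rightarrow> bool" where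
  "npg_step v rr r f Lmin Lmax tau c M lam ys l \<longleftrightarrow>
     (\<exists>xi L0 m (us :: nat \<Rightarrow> (real^'n::enum)^'N::enum).
        xi \<in> xiset v rr r lam (ys l) \<and> Lmin \<le> L0 \<and> L0 \<le> Lmax \<and>
        (\<forall>j\<le>m. us j \<in> pseudo_proj (Omega v rr r)
              (ys l - (1 / (L0 * tau ^ j)) *\<^sub>R (grad (hfun v rr r f lam) (ys l) - xi)) (ys l)) \<and>
        (\<forall>j\<le>m. (Fpen v rr r f lam (us j) \<le>
              (MAX q\<in>{l - M..l}. Fpen v rr r f lam (ys q)) - ereal (c / 2 * (norm (us j - ys l))\<^sup>2))
            \<longleftrightarrow> j = m) \<and>
        ys (Suc l) = us m)"

definition inner_stop :: "variant \<Rightarrow> ('N \<Rightarrow> nat) \<Rightarrow> nat \<Rightarrow> ((real^'n::enum)^'N::enum \<Rightarrow> real)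
     \<Rightarrow> real \<Rightarrow> real \<Rightarrow> (nat \<Rightarrow> (real^'n::enum)^'N::enum) \<Rightarrow> nat \<Rightarrow> bool" where
  "inner_stop v rr r f eps lam ys l \<longleftrightarrow>
     norm (ys (Suc l) - ys l) \<le> eps \<and>
     Fpen v rr r f lam (ys l) \<le> Fpen v rr r f lam (ys 0) \<and>
     dist0 (statset v rr r f lam (ys l) (ys (Suc l))) \<le> ereal eps"

end

theory Submission
  imports Defs
begin

text \<open>The restart rule guarantees F_lam(y^{t,0}) \<le> F_lam(y^feas) = f(y^feas), and the
  second inner stopping condition keeps the accepted iterate y^{t+1} below that level. As
  f \<ge> 0 and all penalty terms are nonnegative, each single term
  dist^2(A_i(y^{t+1}), C_i) / (2 lam) is at most f(y^feas). Nothing else about the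
  algorithm (the vNPG steps, the rank structure, smoothness of f) is needed.\<close>

lemma mdist_eq_0_if_mem:
  assumes "X \<in> C"
  shows "mdist p q X C = 0"
proof -
  have "fro p q (mminus X X) = 0"
    by (simp add: fro_def mminus_def)
  moreover have "\<forall>z\<in>(\<lambda>Y. fro p q (mminus X Y)) ` C. 0 \<le> z"
    by (auto simp: fro_def intro!: sum_nonneg)
  ultimately show ?thesis
    unfolding mdist_def by (intro cInf_eq_minimum) (use assms in force)+
qed

lemma Fpen_eq_if_feasible:
  assumes "y \<in> Omega v rr r" "\<forall>i\<in>Idx v. Amap rr r i y \<in> Cset CARD('n) CARD('N) rr r i"
  shows "Fpen v rr r f lam (y :: (real^'n::enum)^'N::enum) = ereal (f y)"
  using assms by (simp add: Fpen_def mdist_eq_0_if_mem)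

lemma Fpen_le_ereal_imp_penalty_le:
  fixes y :: "(real^'n::enum)^'N::enum"
  assumes "Fpen v rr r f lam y \<le> ereal \<beta>"
  shows "f y + (\<Sum>i\<in>Idx v. 1 / (2 * lam) *
          (mdist (rowsA rr r i) (colsA CARD('n) CARD('N) rr r i) (Amap rr r i y)
                 (Cset CARD('n) CARD('N) rr r i))\<^sup>2) \<le> \<beta>"
proof -
  have "y \<in> Omega v rr r"
  proof (rule ccontr)
    assume "y \<notin> Omega v rr r"
    then have "Fpen v rr r f lam y = \<infinity>" by (simp add: Fpen_def)
    with assms show False by simp
  qed
  with assms show ?thesis by (simp add: Fpen_def)
qed

lemma abs_le_sqrt_if_sq_div_le:
  fixes m lam \<beta> :: real
  assumes "0 < lam" "1 / (2 * lam) * m\<^sup>2 \<le> \<beta>"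
  shows "\<bar>m\<bar> \<le> sqrt (2 * lam * \<beta>)"
proof -
  have "m\<^sup>2 \<le> 2 * lam * \<beta>"
    using assms by (simp add: pos_divide_le_eq mult.commute)
  then have "sqrt (m\<^sup>2) \<le> sqrt (2 * lam * \<beta>)" by (rule real_sqrt_le_mono)
  then show ?thesis by simp
qed

lemma mdist_le_sqrt_if_Fpen_le:
  fixes f :: "(real^'n::enum)^'N::enum \<Rightarrow> real" and y :: "(real^'n::enum)^'N::enum"
  assumes Fpen_le: "Fpen v rr r f lam y \<le> ereal \<beta>" and "0 < lam" and "0 \<le> f y"
    and i: "i \<in> Idx v"
  shows "mdist (rowsA rr r i) (colsA CARD('n) CARD('N) rr r i) (Amap rr r i y)
           (Cset CARD('n) CARD('N) rr r i) \<le> sqrt (2 * lam * \<beta>)"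
proof -
  define g where "g j = 1 / (2 * lam) *
    (mdist (rowsA rr r j) (colsA CARD('n) CARD('N) rr r j) (Amap rr r j y)
           (Cset CARD('n) CARD('N) rr r j))\<^sup>2" for j
  have "g i \<le> sum g (Idx v)"
    using i \<open>0 < lam\<close> by (intro member_le_sum) (auto simp: g_def)
  moreover have "f y + sum g (Idx v) \<le> \<beta>"
    using Fpen_le_ereal_imp_penalty_le[OF Fpen_le] by (simp add: g_def)
  ultimately have "g i \<le> \<beta>"
    using \<open>0 \<le> f y\<close> by linarith
  then show ?thesis
    using abs_le_sqrt_if_sq_div_le[OF \<open>0 < lam\<close>] unfolding g_def by fastforce
qed

lemma Fpen_outer_iterate_le_feasible:
  fixes f :: "(real^'n::enum)^'N::enum \<Rightarrow> real"
  assumes "yfeas \<in> Omega v rr r"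
      "\<forall>i\<in>Idx v. Amap rr r i yfeas \<in> Cset CARD('n) CARD('N) rr r i"
    and restart: "ys 0 = (if Fpen v rr r f lam y \<le> Fpen v rr r f lam yfeas then y else yfeas)"
    and "inner_stop v rr r f eps lam ys l"
  shows "Fpen v rr r f lam (ys l) \<le> ereal (f yfeas)"
proof -
  have feas: "Fpen v rr r f lam yfeas = ereal (f yfeas)"
    using assms(1,2) by (rule Fpen_eq_if_feasible)
  have "Fpen v rr r f lam (ys l) \<le> Fpen v rr r f lam (ys 0)"
    using \<open>inner_stop v rr r f eps lam ys l\<close> by (simp add: inner_stop_def)
  also have "\<dots> \<le> ereal (f yfeas)"
    using restart feas by (auto split: if_splits)
  finally show ?thesis .
qed

theorem theorem3p2:
  fixes v :: variant
    and rr :: "'N::enum \<Rightarrow> nat" and r :: nat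
    and f :: "(real^'n::enum)^'N::enum \<Rightarrow> real"
    and Lmin Lmax tau c :: real and M :: nat
    and eps lam :: "nat \<Rightarrow> real" and lambar :: real
    and yfeas y0 :: "(real^'n::enum)^'N::enum"
    and Y :: "nat \<Rightarrow> (real^'n::enum)^'N::enum"
    and Yin :: "nat \<Rightarrow> nat \<Rightarrow> (real^'n::enum)^'N::enum"
    and lt :: "nat \<Rightarrow> nat" and T :: enat
  assumes ranks: "\<forall>b. 1 \<le> rr b \<and> rr b \<le> r" "r \<le> (CARD('n) - 1) div 2"
    and f_nonneg: "\<forall>y. 0 \<le> f y"
    and f_lvlbdd: "\<forall>\<alpha>. bounded {y. f y \<le> \<alpha>}"
    and f_diff: "\<forall>y. f differentiable (at y)"
    and f_C1: "continuous_on UNIV (grad f)"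
    and f_lip: "\<exists>L. L-lipschitz_on UNIV (grad f)"
    and params: "0 < Lmin" "Lmin < Lmax" "1 < tau" "0 < c"
    and eps: "\<forall>t. 0 < eps t" "decseq eps" "eps \<longlonglongrightarrow> 0"
    and lam: "\<forall>t. 0 < lam t" "decseq lam" "lam \<longlonglongrightarrow> 0"
    and lambar: "0 \<le> lambar"
    and feas: "yfeas \<in> Omega v rr r"
      "\<forall>i\<in>Idx v. Amap rr r i yfeas \<in> Cset CARD('n) CARD('N) rr r i"
    and start: "y0 \<in> Omega v rr r" "Y 0 = y0"
    and iter: "\<forall>t. enat (Suc t) \<le> T \<longrightarrow>
        Yin t 0 = (if Fpen v rr r f (lam t) (Y t) \<le> Fpen v rr r f (lam t) yfeas
                   then Y t else yfeas)
      \<and> (\<forall>l\<le>lt t. npg_step v rr r f Lmin Lmax tau c M (lam t) (Yin t) l)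
      \<and> inner_stop v rr r f (eps t) (lam t) (Yin t) (lt t)
      \<and> (\<forall>l<lt t. \<not> inner_stop v rr r f (eps t) (lam t) (Yin t) l)
      \<and> Y (Suc t) = Yin t (lt t)"
    and no_early_stop: "\<forall>t. enat (Suc t) < T \<longrightarrow> \<not> (lam (Suc t) < lambar \<and> 0 < lambar)"
  shows "\<forall>t. 1 \<le> t \<and> enat t \<le> T \<longrightarrow>
     (\<forall>i\<in>Idx v. mdist (rowsA rr r i) (colsA CARD('n) CARD('N) rr r i) (Amap rr r i (Y t))
                       (Cset CARD('n) CARD('N) rr r i)
                 \<le> sqrt (2 * lam (t - 1) * f yfeas))"
proof (intro allI impI ballI)
  fix t and i :: "'N option"
  assume t: "1 \<le> t \<and> enat t \<le> T" and i: "i \<in> Idx v"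
  then obtain s where s: "t = Suc s" by (cases t) auto
  with t iter have "Yin s 0 = (if Fpen v rr r f (lam s) (Y s) \<le> Fpen v rr r f (lam s) yfeas
                                then Y s else yfeas)"
      "inner_stop v rr r f (eps s) (lam s) (Yin s) (lt s)" "Y t = Yin s (lt s)"
    by auto
  then have "Fpen v rr r f (lam s) (Y t) \<le> ereal (f yfeas)"
    using Fpen_outer_iterate_le_feasible[OF feas] by metis
  then show "mdist (rowsA rr r i) (colsA CARD('n) CARD('N) rr r i) (Amap rr r i (Y t))
               (Cset CARD('n) CARD('N) rr r i) \<le> sqrt (2 * lam (t - 1) * f yfeas)"
    using mdist_le_sqrt_if_Fpen_le[OF _ lam(1)[rule_format] f_nonneg[rule_format] i] s
    by simp
qed

end
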